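(* For integers $0\le k\le n$ define $$B_{n,k}=\sum_{j=0}^{n-k}(-1)^{n-k-j}\binom{n+1}{n-k-j}(2j+1)^n,$$ so that $a_{n,k}=B_{n,k}/(2^nn!)$ are the coefficients whose associated polynomial is $P_n(z)=z^n$. Then the $B_{n,k}$ are integers and, as formal power series in $z$, $$\sum_{n\ge0}\left(\sum_{k=0}^nB_{n,k}x^k\right)\frac{z^n}{n!}=\frac{(1-x)e^{(1-x)z}}{1-xe^{2z(1-x)}}.$$ Moreover $\sum_{k=0}^n B_{n,k}=2^nn!$, i.e. $a_{n,0}+\cdots+a_{n,n}=1$.
   Context: $\imath=\sqrt{-1}$. $\mathcal{A}$ denotes the quotient of the free associative $\mathbb{C}$-algebra on two noncommuting generators $p,q$ by the two-sided ideal generated by $qp-pq-\imath$, and $z=\tfrac12(qp+pq)\in\mathcal A$. For complex numbers $a_{n,0},\dots,a_{n,n}$, the associated polynomial is the unique $P_n\in\mathbb C[X]$ of degree $\le n$ with $\sum_{k=0}^n a_{n,k}q^kp^nq^{n-k}=P_n(z)$ in $\mathcal A$. *)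

theory Defs
  imports Complex_Main "HOL-Computational_Algebra.Polynomial" "HOL-Computational_Algebra.Formal_Power_Series"
    "HOL-Computational_Algebra.Fraction_Field"
begin

text \<open>The numbers B(n,k), defined as rationals (so that integrality is a genuine claim).
  Only used for k \<le> n.\<close>
definition B :: "nat \<Rightarrow> nat \<Rightarrow> rat" where
  "B n k = (\<Sum>j = 0..n - k. (-1) ^ (n - k - j) * of_nat ((n + 1) choose (n - k - j))
                              * of_nat (2 * j + 1) ^ n)"

definition xvar :: "rat poly fract" where
  "xvar = Fract [:0, 1:] 1"

end

(* B n k is the coefficient of x^(n-k) in E_n(x) = (1-x)^(n+1) * sum_j (2j+1)^n x^j, a type B
   Eulerian polynomial.  The coefficient of x^i in E_n is the (n+1)-st finite difference of
   t |-> (2t+1)^n over the arguments i, i-1, ..., i-n-1, and it vanishes since (2t+1)^n has degree n.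
   For i > n this makes E_n a polynomial of degree at most n; for i <= n the terms with negative t,
   where (2t+1)^n = (-1)^n (2(-1-t)+1)^n, add up to minus the coefficient of x^(n-i), so the
   coefficients are symmetric.  Hence sum_k B n k x^k = E_n(x), and expanding (2j+3)^n in powers of
   2j+1 gives E_n = (1-x)^(n+1) + x sum_m C(n,m) (2(1-x))^(n-m) E_m, which is the generating-function
   identity read coefficientwise.  Finally E_n(1) is the n-th difference of (2t+1)^n, i.e. 2^n n!.
   Both facts about differences are read off the exponential generating function
   e^(cz) (1 - e^(-dz))^N of the sums sum_l (-1)^l C(N,l) (c - d l)^n. *)

theory Submission
  imports Defs "HOL-Computational_Algebra.Polynomial_FPS" "HOL-Computational_Algebra.Polynomial_Factorial"
begin

unbundle fps_syntax

lemma fps_one_minus_power_binomial: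
  "(1 - f) ^ N = (\<Sum>k\<le>N. fps_const ((-1) ^ k * of_nat (N choose k)) * f ^ k)"
  for f :: "'a::comm_ring_1 fps"
proof -
  have "(- f + 1) ^ N = (\<Sum>k\<le>N. of_nat (N choose k) * (- f) ^ k * 1 ^ (N - k))"
    by (rule binomial_ring)
  then show ?thesis
    by (simp add: power_minus[of f] mult_ac flip: fps_of_nat fps_const_power fps_const_neg fps_const_mult)
qed

lemma fps_nth_one_minus_X_power:
  "((1 - fps_X) ^ N :: 'a::comm_ring_1 fps) $ i = (-1) ^ i * of_nat (N choose i)"
proof -
  have "((1 - fps_X) ^ N :: 'a fps) $ i
      = (\<Sum>k\<le>N. (-1) ^ k * of_nat (N choose k) * (if i = k then 1 else 0))"
    by (simp only: fps_one_minus_power_binomial fps_sum_nth fps_mult_left_const_nth fps_X_power_nth)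
  also have "\<dots> = (\<Sum>k\<le>N. if k = i then (-1) ^ k * of_nat (N choose k) else 0)"
    by (rule sum.cong) auto
  also have "\<dots> = (-1) ^ i * of_nat (N choose i)"
    by (simp add: sum.delta not_le binomial_eq_0)
  finally show ?thesis .
qed

lemma sum_fps_nth_one_minus_X_times:
  "(\<Sum>i\<le>n. ((1 - fps_X) * f) $ i) = (f $ n :: 'a::comm_ring_1)"
proof (induction n)
  case (Suc n)
  have "((1 - fps_X) * f) $ Suc n = f $ Suc n - f $ n"
    by (simp only: left_diff_distrib mult_1 fps_sub_nth fps_X_mult_nth) simp
  with Suc show ?case
    by simp
qed simp

lemma alternating_binomial_sum_power_eq_fps_nth:
  fixes c d :: "'a::field_char_0"
  shows "(\<Sum>l\<le>N. (-1) ^ l * of_nat (N choose l) * (c - d * of_nat l) ^ n)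
    = fact n * (fps_exp c * (1 - fps_exp (- d)) ^ N) $ n"
proof -
  have "fps_exp (c - d * of_nat l) = fps_exp c * fps_exp (- d) ^ l" for l
    by (simp add: fps_exp_power_mult algebra_simps flip: fps_exp_add_mult)
  then have "fps_exp c * (1 - fps_exp (- d)) ^ N
      = (\<Sum>l\<le>N. fps_const ((-1) ^ l * of_nat (N choose l)) * fps_exp (c - d * of_nat l))"
    by (simp add: fps_one_minus_power_binomial sum_distrib_left mult_ac)
  then show ?thesis
    by (simp add: fps_sum_nth sum_distrib_left)
qed

lemma alternating_binomial_sum_power_eq_0:
  fixes c d :: "'a::field_char_0"
  assumes "n < N"
  shows "(\<Sum>l\<le>N. (-1) ^ l * of_nat (N choose l) * (c - d * of_nat l) ^ n) = 0"
  using startsby_zero_power_prefix[of "1 - fps_exp (- d)" N] assms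
  by (auto simp: alternating_binomial_sum_power_eq_fps_nth fps_mult_nth intro!: sum.neutral)

lemma alternating_binomial_sum_power_eq_fact:
  fixes c d :: "'a::field_char_0"
  shows "(\<Sum>l\<le>n. (-1) ^ l * of_nat (n choose l) * (c - d * of_nat l) ^ n) = fact n * d ^ n"
proof -
  have "(fps_exp c * (1 - fps_exp (- d)) ^ n) $ n = (\<Sum>i=0..n. if i = 0 then d ^ n else 0)"
    unfolding fps_mult_nth
    using startsby_zero_power_prefix[of "1 - fps_exp (- d)" n]
      startsby_zero_power_nth_same[of "1 - fps_exp (- d)" n]
    by (intro sum.cong) auto
  then show ?thesis
    by (simp add: alternating_binomial_sum_power_eq_fps_nth)
qed

lemma egf_times_fps_exp:
  fixes a :: "nat \<Rightarrow> 'a::field_char_0"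
  shows "Abs_fps (\<lambda>n. a n / fact n) * fps_exp c
    = Abs_fps (\<lambda>n. (\<Sum>m\<le>n. of_nat (n choose m) * a m * c ^ (n - m)) / fact n)"
proof (rule fps_ext)
  fix n
  have "a m / fact m * (c ^ (n - m) / fact (n - m)) = of_nat (n choose m) * a m * c ^ (n - m) / fact n"
    if "m \<le> n" for m
    using that by (simp add: binomial_fact field_simps)
  then show "(Abs_fps (\<lambda>n. a n / fact n) * fps_exp c) $ n
      = Abs_fps (\<lambda>n. (\<Sum>m\<le>n. of_nat (n choose m) * a m * c ^ (n - m)) / fact n) $ n"
    by (simp add: fps_mult_nth atLeast0AtMost sum_divide_distrib)
qed

lemma to_fract_power: "to_fract (x ^ k) = to_fract x ^ k"
  by (induction k) simp_all

lemma to_fract_of_nat: "to_fract (of_nat k) = of_nat k"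
  by (simp add: to_fract_def Fract_of_nat_eq)

lemma to_fract_numeral: "to_fract (numeral k) = numeral k"
  by (metis of_nat_numeral to_fract_of_nat)

lemma fps_of_poly_of_nat: "fps_of_poly (of_nat k) = of_nat k"
  by (simp add: of_nat_poly fps_of_poly_const fps_of_nat)

definition odd_powers_fps :: "nat \<Rightarrow> 'a::comm_semiring_1 fps" where
  "odd_powers_fps n = Abs_fps (\<lambda>j. of_nat (2 * j + 1) ^ n)"

lemma nth_one_minus_X_power_times_odd_powers_fps:
  "((1 - fps_X) ^ N * odd_powers_fps n :: 'a::comm_ring_1 fps) $ i
    = (\<Sum>l=0..i. (-1) ^ l * of_nat (N choose l) * (of_nat (2 * i + 1) - 2 * of_nat l) ^ n)"
  unfolding fps_mult_nth
  by (intro sum.cong) (auto simp: fps_nth_one_minus_X_power odd_powers_fps_def of_nat_diff algebra_simps)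

lemma odd_powers_fps_shift:
  "odd_powers_fps n
    = (1 + fps_X * (\<Sum>m\<le>n. fps_const (of_nat (n choose m) * 2 ^ (n - m)) * odd_powers_fps m)
        :: 'a::comm_semiring_1 fps)"
proof (rule fps_ext)
  fix j
  show "(odd_powers_fps n :: 'a fps) $ j
    = (1 + fps_X * (\<Sum>m\<le>n. fps_const (of_nat (n choose m) * 2 ^ (n - m)) * odd_powers_fps m)) $ j"
  proof (cases j)
    case (Suc i)
    have "2 * j + 1 = (2 * i + 1) + 2"
      using Suc by simp
    then have "(of_nat (2 * j + 1) :: 'a) ^ n = (of_nat (2 * i + 1) + 2) ^ n"
      by (simp only: of_nat_add of_nat_numeral)
    also have "\<dots> = (\<Sum>m\<le>n. of_nat (n choose m) * of_nat (2 * i + 1) ^ m * 2 ^ (n - m))"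
      by (rule binomial_ring)
    finally have "(of_nat (2 * j + 1) :: 'a) ^ n
        = (\<Sum>m\<le>n. of_nat (n choose m) * 2 ^ (n - m) * of_nat (2 * i + 1) ^ m)"
      by (simp only: mult_ac)
    then show ?thesis
      using Suc by (simp add: odd_powers_fps_def fps_sum_nth del: of_nat_add of_nat_mult)
  qed (simp add: odd_powers_fps_def)
qed

abbreviation eulerB_fps :: "nat \<Rightarrow> rat fps" where
  "eulerB_fps n \<equiv> (1 - fps_X) ^ Suc n * odd_powers_fps n"

lemmas nth_eulerB_fps = nth_one_minus_X_power_times_odd_powers_fps[where N = "Suc n" for n]

lemma nth_eulerB_fps':
  "eulerB_fps n $ i = (\<Sum>j=0..i. (-1) ^ (i - j) * of_nat (Suc n choose (i - j)) * of_nat (2 * j + 1) ^ n)"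
  unfolding mult.commute[of "(1 - fps_X) ^ Suc n"] fps_mult_nth
  by (simp add: fps_nth_one_minus_X_power odd_powers_fps_def mult_ac del: power_Suc)

lemma B_eq_nth_eulerB_fps: "B n k = eulerB_fps n $ (n - k)"
  unfolding B_def nth_eulerB_fps' by simp

lemma B_in_Ints: "B n k \<in> \<int>"
  unfolding B_def by (intro Ints_sum Ints_mult Ints_power Ints_of_nat Ints_minus Ints_1)

lemma nth_eulerB_fps_eq_0:
  assumes "n < i"
  shows "eulerB_fps n $ i = 0"
proof -
  have "eulerB_fps n $ i
      = (\<Sum>l\<le>Suc n. (-1) ^ l * of_nat (Suc n choose l) * (of_nat (2 * i + 1) - 2 * of_nat l) ^ n)"
    unfolding nth_eulerB_fps using assms by (intro sum.mono_neutral_right) auto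
  also have "\<dots> = 0"
    by (rule alternating_binomial_sum_power_eq_0) simp
  finally show ?thesis .
qed

(* The terms of index l = i+1+j of the difference at 2i+1, whose argument 2(i-l)+1 is negative. *)
lemma alternating_odd_power_term_reflect:
  assumes "i \<le> n" "j \<le> n - i"
  shows "(-1) ^ (j + Suc i) * of_nat (Suc n choose (j + Suc i)) * (of_nat (2 * i + 1) - 2 * of_nat (j + Suc i)) ^ n
    = - ((-1) ^ (n - i - j) * of_nat (Suc n choose (n - i - j)) * (of_nat (2 * j + 1) ^ n :: rat))"
proof -
  have choose: "Suc n choose (j + Suc i) = Suc n choose (n - i - j)"
    using binomial_symmetric[of "j + Suc i" "Suc n"] assms
    by (simp add: add.commute del: binomial_Suc_Suc)
  have base: "of_nat (2 * i + 1) - 2 * of_nat (j + Suc i) = - (of_nat (2 * j + 1) :: rat)"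
    by simp
  have "j + Suc i + n = Suc (2 * (i + j) + (n - i - j))"
    using assms by simp
  then have "((-1) ^ (j + Suc i) :: rat) * (-1) ^ n = (-1) ^ Suc (2 * (i + j) + (n - i - j))"
    by (metis power_add)
  then have sign: "((-1) ^ (j + Suc i) :: rat) * (-1) ^ n = - ((-1) ^ (n - i - j))"
    by (simp add: power_add power_mult)
  have "(-1) ^ (j + Suc i) * of_nat (Suc n choose (j + Suc i)) * (of_nat (2 * i + 1) - 2 * of_nat (j + Suc i)) ^ n
      = ((-1) ^ (j + Suc i) * (-1) ^ n) * (of_nat (Suc n choose (n - i - j)) * (of_nat (2 * j + 1) ^ n :: rat))"
    unfolding choose base power_minus[of "of_nat (2 * j + 1)"] by (simp only: mult_ac)
  then show ?thesis
    unfolding sign by simp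
qed

lemma nth_eulerB_fps_symmetric:
  assumes "i \<le> n"
  shows "eulerB_fps n $ (n - i) = eulerB_fps n $ i"
proof -
  define f :: "nat \<Rightarrow> rat" where
    "f l = (-1) ^ l * of_nat (Suc n choose l) * (of_nat (2 * i + 1) - 2 * of_nat l) ^ n" for l
  have "(\<Sum>l\<le>Suc n. f l) = 0"
    unfolding f_def by (rule alternating_binomial_sum_power_eq_0) simp
  moreover have "(\<Sum>l\<le>Suc n. f l) = (\<Sum>l=0..i. f l) + (\<Sum>l=Suc i..Suc n. f l)"
    using sum.ub_add_nat[of 0 i f "Suc n - i"] assms by (simp add: atLeast0AtMost)
  moreover have "(\<Sum>l=0..i. f l) = eulerB_fps n $ i"
    unfolding nth_eulerB_fps f_def ..
  moreover have "(\<Sum>l=Suc i..Suc n. f l) = (\<Sum>j=0..n - i. f (j + Suc i))"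
    using sum.shift_bounds_cl_nat_ivl[of f 0 "Suc i" "n - i"] assms by simp
  moreover have "\<dots> = - (eulerB_fps n $ (n - i))"
    unfolding nth_eulerB_fps' sum_negf[symmetric] f_def
    using assms by (intro sum.cong refl alternating_odd_power_term_reflect) auto
  ultimately show ?thesis
    by linarith
qed

lemma sum_B: "(\<Sum>k\<le>n. B n k) = 2 ^ n * fact n"
proof -
  have "(\<Sum>k\<le>n. B n k) = (\<Sum>i\<le>n. eulerB_fps n $ i)"
    using sum.atLeastAtMost_rev[of "\<lambda>i. eulerB_fps n $ i" 0 n]
    by (simp add: B_eq_nth_eulerB_fps atLeast0AtMost)
  also have "\<dots> = ((1 - fps_X) ^ n * odd_powers_fps n) $ n"
    by (simp only: power_Suc mult.assoc sum_fps_nth_one_minus_X_times)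
  also have "\<dots> = (\<Sum>l\<le>n. (-1) ^ l * of_nat (n choose l) * (of_nat (2 * n + 1) - 2 * of_nat l) ^ n)"
    by (simp add: nth_one_minus_X_power_times_odd_powers_fps atLeast0AtMost)
  also have "\<dots> = 2 ^ n * fact n"
    by (subst alternating_binomial_sum_power_eq_fact) (rule mult.commute)
  finally show ?thesis .
qed

definition eulerB_poly :: "nat \<Rightarrow> rat poly" where
  "eulerB_poly n = (\<Sum>k\<le>n. monom (B n k) k)"

lemma coeff_eulerB_poly: "coeff (eulerB_poly n) i = (if i \<le> n then B n i else 0)"
  by (simp add: eulerB_poly_def coeff_sum coeff_monom)

lemma fps_of_eulerB_poly: "fps_of_poly (eulerB_poly n) = eulerB_fps n"
proof (rule fps_ext)
  fix i
  show "fps_of_poly (eulerB_poly n) $ i = eulerB_fps n $ i"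
    by (cases "i \<le> n")
      (simp_all add: coeff_eulerB_poly B_eq_nth_eulerB_fps nth_eulerB_fps_symmetric nth_eulerB_fps_eq_0
        del: power_Suc)
qed

lemma eulerB_poly_rec:
  "eulerB_poly n = (1 - [:0, 1:]) ^ Suc n
     + [:0, 1:] * (\<Sum>m\<le>n. of_nat (n choose m) * (2 * (1 - [:0, 1:])) ^ (n - m) * eulerB_poly m)"
proof -
  let ?T = "1 - fps_X :: rat fps"
  have "eulerB_fps n
      = ?T ^ Suc n + fps_X * (\<Sum>m\<le>n. fps_const (of_nat (n choose m) * 2 ^ (n - m)) * (?T ^ Suc n * odd_powers_fps m))"
    by (subst odd_powers_fps_shift[of n]) (simp add: algebra_simps sum_distrib_left)
  also have "(\<Sum>m\<le>n. fps_const (of_nat (n choose m) * 2 ^ (n - m)) * (?T ^ Suc n * odd_powers_fps m))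
      = (\<Sum>m\<le>n. of_nat (n choose m) * (2 * ?T) ^ (n - m) * eulerB_fps m)"
  proof (rule sum.cong)
    fix m assume "m \<in> {..n}"
    then have split: "?T ^ Suc n = ?T ^ (n - m) * ?T ^ Suc m"
      by (simp flip: power_add)
    have const: "fps_const (of_nat (n choose m) * 2 ^ (n - m)) = (of_nat (n choose m) * 2 ^ (n - m) :: rat fps)"
      by (simp flip: fps_const_mult fps_const_power fps_of_nat fps_numeral_fps_const)
    show "fps_const (of_nat (n choose m) * 2 ^ (n - m)) * (?T ^ Suc n * odd_powers_fps m)
        = of_nat (n choose m) * (2 * ?T) ^ (n - m) * eulerB_fps m"
      by (simp only: const split power_mult_distrib mult_ac)
  qed simp
  also have "?T ^ Suc n + fps_X * (\<Sum>m\<le>n. of_nat (n choose m) * (2 * ?T) ^ (n - m) * eulerB_fps m)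
      = fps_of_poly ((1 - [:0, 1:]) ^ Suc n
          + [:0, 1:] * (\<Sum>m\<le>n. of_nat (n choose m) * (2 * (1 - [:0, 1:])) ^ (n - m) * eulerB_poly m))"
    by (simp only: fps_of_poly_add fps_of_poly_diff fps_of_poly_mult fps_of_poly_power fps_of_poly_sum
        fps_of_poly_1 fps_of_poly_fps_X fps_of_poly_numeral fps_of_poly_of_nat fps_of_eulerB_poly)
  finally show ?thesis
    by (simp only: fps_of_eulerB_poly [symmetric] fps_of_poly_eq_iff)
qed

lemma to_fract_X: "to_fract [:0, 1:] = xvar"
  by (simp add: xvar_def to_fract_def)

lemma one_minus_xvar_nonzero: "1 - xvar \<noteq> 0"
proof -
  have "coeff (1 - [:0, 1:] :: rat poly) 0 = 1"
    by simp
  then have "(1 - [:0, 1:] :: rat poly) \<noteq> 0"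
    by (metis coeff_0 zero_neq_one)
  moreover have "1 - xvar = to_fract (1 - [:0, 1:])"
    by (simp add: to_fract_X)
  ultimately show ?thesis
    by (metis to_fract_eq_0_iff)
qed

lemma to_fract_eulerB_poly_rec:
  "to_fract (eulerB_poly n)
    = (1 - xvar) ^ Suc n
      + xvar * (\<Sum>m\<le>n. of_nat (n choose m) * to_fract (eulerB_poly m) * (2 * (1 - xvar)) ^ (n - m))"
proof -
  have "to_fract (eulerB_poly n) = to_fract ((1 - [:0, 1:]) ^ Suc n
      + [:0, 1:] * (\<Sum>m\<le>n. of_nat (n choose m) * (2 * (1 - [:0, 1:])) ^ (n - m) * eulerB_poly m))"
    by (rule arg_cong[OF eulerB_poly_rec])
  then show ?thesis
    by (simp only: to_fract_add to_fract_diff to_fract_mult to_fract_power to_fract_sum to_fract_of_nat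
        to_fract_numeral to_fract_1 to_fract_X mult_ac)
qed

lemma eulerB_egf:
  "Abs_fps (\<lambda>n. Fract (\<Sum>k\<le>n. monom (B n k) k) 1 / of_nat (fact n))
    = fps_const (1 - xvar) * fps_exp (1 - xvar) / (1 - fps_const xvar * fps_exp (2 * (1 - xvar)))"
proof -
  define A where "A = Abs_fps (\<lambda>n. to_fract (eulerB_poly n) / fact n)"
  define D where "D = 1 - fps_const xvar * fps_exp (2 * (1 - xvar))"
  have "A * D = A - fps_const xvar * (A * fps_exp (2 * (1 - xvar)))"
    unfolding D_def by (simp only: right_diff_distrib mult_1_right mult.left_commute)
  also have "\<dots> = fps_const (1 - xvar) * fps_exp (1 - xvar)"
  proof (rule fps_ext)
    fix n
    have "(A - fps_const xvar * (A * fps_exp (2 * (1 - xvar)))) $ n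
        = (to_fract (eulerB_poly n)
           - xvar * (\<Sum>m\<le>n. of_nat (n choose m) * to_fract (eulerB_poly m) * (2 * (1 - xvar)) ^ (n - m)))
          / fact n"
      by (simp only: A_def egf_times_fps_exp fps_sub_nth fps_mult_left_const_nth fps_nth_Abs_fps
          diff_divide_distrib times_divide_eq_right)
    also have "\<dots> = (fps_const (1 - xvar) * fps_exp (1 - xvar)) $ n"
      by (subst to_fract_eulerB_poly_rec) simp
    finally show "(A - fps_const xvar * (A * fps_exp (2 * (1 - xvar)))) $ n
        = (fps_const (1 - xvar) * fps_exp (1 - xvar)) $ n" .
  qed
  finally have "A * D = fps_const (1 - xvar) * fps_exp (1 - xvar)" .
  moreover have "D \<noteq> 0"
  proof
    assume "D = 0"
    then have "D $ 0 = 0" by simp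
    then show False
      using one_minus_xvar_nonzero by (simp add: D_def)
  qed
  ultimately have "fps_const (1 - xvar) * fps_exp (1 - xvar) / D = A"
    using fps_divide_times_eq[of D A] by simp
  then show ?thesis
    unfolding A_def D_def eulerB_poly_def to_fract_def of_nat_fact by (rule sym)
qed

theorem lemma6p1:
  shows "(\<forall>n k. k \<le> n \<longrightarrow> B n k \<in> \<int>)
    \<and> Abs_fps (\<lambda>n. Fract (\<Sum>k\<le>n. monom (B n k) k) 1 / of_nat (fact n))
        = fps_const (1 - xvar) * fps_exp (1 - xvar)
          / (1 - fps_const xvar * fps_exp (2 * (1 - xvar)))
    \<and> (\<forall>n. (\<Sum>k\<le>n. B n k) = 2 ^ n * fact n)"
  using B_in_Ints eulerB_egf sum_B by blast

end
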